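(* Let $q$ be odd, $\varepsilon=\left(\frac{-1}{q}\right)$, $\nu=\left(\frac2q\right)$. For every $k\ge1$, $T_k(1)=1$, $T_k(-1)=(-1)^k$, and, viewing $T_k$ as a map ${\mathbb F}_q\to{\mathbb F}_q$: (i) $T_k(\mathcal A_1^{\nu,\nu})\subset\mathcal A_1^{\nu,\nu}\sqcup\{1,-\varepsilon\}$ and $T_k(\mathcal A_1^{-\nu,\nu})\subset\mathcal A_1^{-\nu,\nu}\sqcup\{1,\varepsilon\}$. (ii) If $k$ is odd then $T_k(\mathcal A_1^{\varepsilon\nu,-\nu})\subset\mathcal A_1^{\varepsilon\nu,-\nu}\sqcup\{-1\}$ and $T_k(\mathcal A_1^{-\varepsilon\nu,-\nu})\subset\mathcal A_1^{-\varepsilon\nu,-\nu}$. (iii) If $k$ is even then $T_k(\mathcal A_1^{-\nu,-\nu})\subset\mathcal A_1^{\nu,\nu}\sqcup\{1,-\varepsilon\}$ and $T_k(\mathcal A_1^{\nu,-\nu})\subset\mathcal A_1^{-\nu,\nu}\sqcup\{1,\varepsilon\}$. (iv) If $(q-1)/2$ divides $k$, then $T_k({\mathbb F}_q)\subset\mathcal A_1^{+-}\sqcup\mathcal A_1^{-+}\sqcup\{1,-1\}=\{a\in{\mathbb F}_q:a^2-1\text{ is a nonsquare}\}\sqcup\{1,-1\}$; if in addition $k$ is even, $T_k({\mathbb F}_q)\subset\mathcal A_1^{-\nu,\nu}\sqcup\{1,-1\}$. (v) If $(q+1)/2$ divides $k$, then $T_k({\mathbb F}_q)\subset\mathcal A_1^{++}\sqcup\mathcal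 A_1^{--}\sqcup\{1,-1\}=\{a\in{\mathbb F}_q:a^2-1\text{ is a square (possibly }0)\}$; if in addition $k$ is even, $T_k({\mathbb F}_q)\subset\mathcal A_1^{\nu,\nu}\sqcup\{1,-1\}$. (vi) If $\mathcal A_1^{\varepsilon_1,\varepsilon_2}$ is nonempty, then $T_k$ permutes $\mathcal A_1^{\varepsilon_1,\varepsilon_2}$ iff $\gcd(k,d^{\nu\varepsilon_1,\nu\varepsilon_2})=1$, where $d^{++}=(q-1)/2$, $d^{+-}=q+1$, $d^{-+}=(q+1)/2$, $d^{--}=q-1$.
   Context: Chebyshev polynomials of the first kind $T_k\in\mathbb Z[x]$: $T_0=1$, $T_1=x$, $T_{k+2}=2xT_{k+1}-T_k$. $\left(\frac{a}{q}\right)$ is the Legendre symbol on ${\mathbb F}_q$. For $\varepsilon_1,\varepsilon_2\in\{1,-1\}$ (written $+,-$) and $\lambda\in{\mathbb F}_q^\times$, $\mathcal A_\lambda^{\varepsilon_1,\varepsilon_2}=\{u\in{\mathbb F}_q:\left(\frac{u-\lambda}{q}\right)=\varepsilon_1,\ \left(\frac{u+\lambda}{q}\right)=\varepsilon_2\}$. *)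

theory Defs
  imports Main
begin

fun cheb :: "nat \<Rightarrow> 'a::comm_ring_1 \<Rightarrow> 'a" where
  "cheb 0 x = 1"
| "cheb (Suc 0) x = x"
| "cheb (Suc (Suc n)) x = 2 * x * cheb (Suc n) x - cheb n x"

definition leg :: "'a::field \<Rightarrow> int" where
  "leg a = (if a = 0 then 0 else if (\<exists>b. b ^ 2 = a) then 1 else -1)"

definition Aset :: "'a::field \<Rightarrow> int \<Rightarrow> int \<Rightarrow> 'a set" where
  "Aset lam e1 e2 = {u. leg (u - lam) = e1 \<and> leg (u + lam) = e2}"

definition dpar :: "nat \<Rightarrow> int \<Rightarrow> int \<Rightarrow> nat" where
  "dpar q e1 e2 =
     (if e1 = 1 then (if e2 = 1 then (q - 1) div 2 else q + 1)
      else (if e2 = 1 then (q + 1) div 2 else q - 1))"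

end

theory Submission
  imports Defs "HOL-Algebra.Sylow" "HOL-Algebra.Multiplicative_Group"
begin

text \<open>Every \<open>u \<noteq> \<plusminus>1\<close> in \<open>\<bbbF>\<^sub>q\<close> is either \<open>(\<lambda> + \<lambda>\<^sup>-\<^sup>1) / 2\<close> with \<open>\<lambda> \<in> \<bbbF>\<^sub>q\<^sup>\<times>\<close>
  (when \<open>u\<^sup>2 - 1\<close> is a square) or the real part \<open>(z + z\<^sup>-\<^sup>1) / 2\<close> of a point \<open>z\<close> on the
  norm-one circle of \<open>\<bbbF>\<^bsub>q\<^sup>2\<^esub>\<close> (otherwise); the parameter is unique up to inversion, and
  \<open>T\<^sub>k\<close> acts on it by \<open>\<lambda> \<mapsto> \<lambda>\<^sup>k\<close>, \<open>z \<mapsto> z\<^sup>k\<close>. The sign pair of \<open>u\<close> only records which of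
  the two groups (of orders \<open>q - 1\<close> and \<open>q + 1\<close>) the parameter lies in and whether it is a
  square there. So (i)--(v) follow from how powers act on squares and nonsquares of such a
  group, whose only square roots of \<open>1\<close> are \<open>\<plusminus>1\<close>, and (vi) from the fact that \<open>x \<mapsto> x\<^sup>k\<close>
  permutes a finite abelian group of order \<open>n\<close> iff \<open>gcd k n = 1\<close>.\<close>

lemma card_eq_double_card_image:
  assumes fin: "finite X" and fibres: "\<And>x. x \<in> X \<Longrightarrow> card {y\<in>X. f y = f x} = 2"
  shows "card X = 2 * card (f ` X)"
proof -
  have "X = (\<Union>z\<in>f ` X. {y\<in>X. f y = z})" by auto
  also have "card \<dots> = (\<Sum>z\<in>f ` X. card {y\<in>X. f y = z})"
    by (rule card_UN_disjoint) (use fin in auto)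
  also have "\<dots> = (\<Sum>z\<in>f ` X. 2)"
    by (rule sum.cong) (auto simp: fibres)
  finally show ?thesis by simp
qed

lemma bij_betw_self_iff_image_eq:
  assumes "finite A"
  shows "bij_betw f A A \<longleftrightarrow> f ` A = A"
  using finite_surj_inj[OF assms] by (auto simp: bij_betw_def)

lemma bij_betw_self_iff_inj_on:
  assumes "finite A" "f ` A \<subseteq> A"
  shows "bij_betw f A A \<longleftrightarrow> inj_on f A"
  using endo_inj_surj[OF assms] by (auto simp: bij_betw_def)

lemma bij_betw_self_Diff_fixed_iff:
  assumes "finite A" "f ` A \<subseteq> A" "D \<subseteq> A" "\<And>x. x \<in> D \<Longrightarrow> f x = x"
  shows "bij_betw f (A - D) (A - D) \<longleftrightarrow> bij_betw f A A"
proof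
  assume "bij_betw f (A - D) (A - D)"
  then have "f ` A = (A - D) \<union> D"
    using assms(3,4) image_Un[of f "A - D" D] by (auto simp: bij_betw_def Un_absorb2)
  then show "bij_betw f A A" using assms(1,3) by (simp add: bij_betw_self_iff_image_eq Un_absorb2)
next
  assume "bij_betw f A A"
  moreover have "bij_betw f D D" using assms(4) by (simp add: bij_betw_def inj_on_def)
  ultimately show "bij_betw f (A - D) (A - D)"
    using assms(3) by (rule bij_betw_DiffI) (use assms(3) in auto)
qed

lemma two_neq_zero_if_odd_card:
  assumes "odd (card (UNIV::'a::{finite,field} set))"
  shows "(2::'a) \<noteq> 0"
proof
  assume "(2::'a) = 0"
  then have "x + 1 + 1 = (x::'a)" for x
    by (metis add.assoc add.right_neutral one_add_one)
  then have "card {y. {y, y + 1} = {x, x + 1}} = 2" for x :: 'a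
    by (subgoal_tac "{y. {y, y + 1} = {x, x + 1}} = {x, x + 1}") (auto simp: doubleton_eq_iff)
  then have "card (UNIV::'a set) = 2 * card ((\<lambda>x. {x, x + 1}) ` (UNIV::'a set))"
    by (intro card_eq_double_card_image) simp_all
  then show False using assms by simp
qed

lemma mult_inverse_unique:
  fixes x :: "'a::comm_monoid_mult"
  shows "x * y = 1 \<Longrightarrow> x * z = 1 \<Longrightarrow> y = z"
  by (metis mult.assoc mult.commute mult_1_right)

lemma mult_eq_one_pm1:
  fixes x :: "'a::comm_ring_1"
  shows "x * y = 1 \<Longrightarrow> y \<in> {1, -1} \<Longrightarrow> x \<in> {1, -1}"
  by (auto simp: minus_equation_iff[of x])

lemma subsets_eq_if_disjoint_cover:
  assumes "A1 \<subseteq> B1" "A2 \<subseteq> B2" "A3 \<subseteq> B3" "A4 \<subseteq> B4"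
    and "B1 \<union> B2 \<union> B3 \<union> B4 \<subseteq> A1 \<union> A2 \<union> A3 \<union> A4"
    and "B1 \<inter> B2 = {}" "B1 \<inter> B3 = {}" "B1 \<inter> B4 = {}" "B2 \<inter> B3 = {}" "B2 \<inter> B4 = {}"
      "B3 \<inter> B4 = {}"
  shows "B1 = A1" "B2 = A2" "B3 = A3" "B4 = A4"
  using assms by blast+

section \<open>Finite multiplicative groups in a commutative ring\<close>

definition mult_monoid :: "'a::comm_ring_1 set \<Rightarrow> 'a monoid" where
  "mult_monoid X = \<lparr>carrier = X, monoid.mult = (*), one = 1\<rparr>"

lemma mult_monoid_simps [simp]:
  "carrier (mult_monoid X) = X" "monoid.mult (mult_monoid X) = (*)" "one (mult_monoid X) = 1"
  by (simp_all add: mult_monoid_def)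

lemma nat_pow_mult_monoid [simp]: "x [^]\<^bsub>mult_monoid X\<^esub> (n::nat) = x ^ n"
  by (induction n) (simp_all add: mult.commute)

lemma nat_pow_mult_monoid_carrier_update [simp]:
  "x [^]\<^bsub>mult_monoid X \<lparr>carrier := Y\<rparr>\<^esub> (n::nat) = x ^ n"
  by (induction n) (simp_all add: mult_monoid_def mult.commute)

locale mult_group =
  fixes H :: "'a::comm_ring_1 set"
  assumes finite_H: "finite H" and one_mem: "1 \<in> H"
    and mult_mem: "\<And>x y. x \<in> H \<Longrightarrow> y \<in> H \<Longrightarrow> x * y \<in> H"
    and inverse_ex: "\<And>x. x \<in> H \<Longrightarrow> \<exists>y\<in>H. x * y = 1"
begin

lemma group: "group (mult_monoid H)"
  by (rule groupI) (auto simp: mult_mem one_mem mult.assoc mult.commute dest: inverse_ex)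

lemma power_mem: "x \<in> H \<Longrightarrow> x ^ n \<in> H"
  by (induction n) (auto simp: one_mem mult_mem)

lemma mem_mult_left_cancel:
  assumes "x \<in> H"
  shows "x * y = x * z \<longleftrightarrow> y = z"
proof
  obtain x' where "x * x' = 1" using inverse_ex assms by blast
  moreover assume "x * y = x * z"
  then have "x' * x * y = x' * x * z" by (simp add: mult.assoc)
  ultimately show "y = z" by (simp add: mult.commute)
qed simp

lemma inj_on_power_iff_kernel:
  "inj_on (\<lambda>x. x ^ k) H \<longleftrightarrow> (\<forall>g\<in>H. g ^ k = 1 \<longrightarrow> g = 1)"
proof
  assume "inj_on (\<lambda>x. x ^ k) H"
  then show "\<forall>g\<in>H. g ^ k = 1 \<longrightarrow> g = 1" using one_mem by (auto dest: inj_onD[of _ _ 1])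
next
  assume kernel: "\<forall>g\<in>H. g ^ k = 1 \<longrightarrow> g = 1"
  show "inj_on (\<lambda>x. x ^ k) H"
  proof (rule inj_onI)
    fix x y assume x: "x \<in> H" and y: "y \<in> H" and eq: "x ^ k = y ^ k"
    obtain y' where y': "y' \<in> H" "y * y' = 1" using inverse_ex y by blast
    have "(x * y') ^ k = (y * y') ^ k" by (simp add: power_mult_distrib eq)
    then have "x * y' = 1" using kernel mult_mem[OF x y'(1)] y'(2) by simp
    then show "x = y" using y'(2) mult_inverse_unique[of y' x y] by (simp add: mult.commute)
  qed
qed

lemma exists_element_of_prime_order:
  assumes p: "prime p" "p dvd card H"
  obtains g where "g \<in> H" "g \<noteq> 1" "g ^ p = 1"
proof -
  interpret G: group "mult_monoid H" by (rule group)
  obtain m where m: "order (mult_monoid H) = p ^ 1 * m" using p(2) by (auto simp: order_def)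
  obtain P where P: "subgroup P (mult_monoid H)" "card P = p"
    using sylow_thm[OF p(1) group m] finite_H by auto
  interpret P: group "(mult_monoid H) \<lparr>carrier := P\<rparr>"
    by (rule G.subgroup_imp_group[OF P(1)])
  have "P \<noteq> {1}" using P(2) prime_gt_1_nat[OF p(1)] by auto
  moreover have "1 \<in> P" using P(1) subgroup.one_closed by fastforce
  ultimately obtain g where g: "g \<in> P" "g \<noteq> 1" by blast
  have "g ^ p = 1" using P.pow_order_eq_1[of g] g(1) P(2) by (simp add: order_def)
  then show ?thesis using that g subgroup.subset[OF P(1)] by auto
qed

lemma inj_on_power_iff_coprime: "inj_on (\<lambda>x. x ^ k) H \<longleftrightarrow> coprime k (card H)"
  unfolding inj_on_power_iff_kernel
proof
  assume kernel: "\<forall>g\<in>H. g ^ k = 1 \<longrightarrow> g = 1"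
  show "coprime k (card H)"
  proof (rule ccontr)
    assume "\<not> coprime k (card H)"
    then obtain p where p: "prime p" "p dvd k" "p dvd card H"
      using prime_factor_nat[of "gcd k (card H)"] by (auto simp: coprime_iff_gcd_eq_1)
    obtain g where "g \<in> H" "g \<noteq> 1" "g ^ p = 1"
      using p(1,3) by (rule exists_element_of_prime_order)
    moreover from this(3) have "g ^ k = 1" using p(2) by (auto simp: power_mult elim: dvdE)
    ultimately show False using kernel by blast
  qed
next
  interpret G: group "mult_monoid H" by (rule group)
  assume coprime: "coprime k (card H)"
  show "\<forall>g\<in>H. g ^ k = 1 \<longrightarrow> g = 1"
  proof (intro ballI impI)
    fix g assume g: "g \<in> H" "g ^ k = 1"
    have "G.ord g dvd k" using G.pow_eq_id[of g k] g by simp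
    moreover have "G.ord g dvd card H" using G.ord_dvd_group_order[of g] g by (simp add: order_def)
    ultimately have "G.ord g = 1" using coprime coprime_common_divisor_nat by blast
    then show "g = 1" using G.ord_eq_1[of g] g(1) by simp
  qed
qed

lemma power_card_eq_one: "x \<in> H \<Longrightarrow> x ^ card H = 1"
  using group.pow_order_eq_1[OF group, of x] by (simp add: order_def)

definition squares :: "'a set" where "squares = (\<lambda>x. x ^ 2) ` H"

lemma squares_subset: "squares \<subseteq> H"
  unfolding squares_def using power_mem by auto

lemma mult_group_squares: "mult_group squares"
proof
  show "finite squares" using finite_H by (simp add: squares_def)
  show "1 \<in> squares" unfolding squares_def using one_mem by force
  show "x * y \<in> squares" if "x \<in> squares" "y \<in> squares" for x y
    using that mult_mem by (auto simp: squares_def power_mult_distrib[symmetric])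
  show "\<exists>y\<in>squares. x * y = 1" if x: "x \<in> squares" for x
  proof -
    obtain z where z: "z \<in> H" "x = z ^ 2" using x unfolding squares_def by blast
    obtain z' where "z' \<in> H" "z * z' = 1" using inverse_ex[OF z(1)] by blast
    then have "z' ^ 2 \<in> squares" "x * z' ^ 2 = 1"
      using z by (auto simp: squares_def power_mult_distrib[symmetric])
    then show ?thesis by blast
  qed
qed

lemma one_mem_squares: "1 \<in> squares"
  using mult_group.one_mem[OF mult_group_squares] .

lemma power_even_mem_squares: "x \<in> H \<Longrightarrow> even n \<Longrightarrow> x ^ n \<in> squares"
  unfolding squares_def using power_mem by (auto elim!: evenE simp: power_mult mult.commute[of 2])

lemma power_mem_squares: "x \<in> squares \<Longrightarrow> x ^ n \<in> squares"
  using mult_group.power_mem[OF mult_group_squares] .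

lemma inverse_mem_squares: "x \<in> squares \<Longrightarrow> y \<in> H \<Longrightarrow> x * y = 1 \<Longrightarrow> y \<in> squares"
  using mult_group.inverse_ex[OF mult_group_squares] mult_inverse_unique by metis

lemma mult_square_mem_squares_iff:
  assumes "x \<in> H" "s \<in> squares"
  shows "x * s \<in> squares \<longleftrightarrow> x \<in> squares"
proof
  obtain s' where s': "s' \<in> squares" "s * s' = 1"
    using mult_group.inverse_ex[OF mult_group_squares assms(2)] by blast
  assume "x * s \<in> squares"
  then have "x * s * s' \<in> squares" using s'(1) mult_group.mult_mem[OF mult_group_squares] by blast
  then show "x \<in> squares" using s'(2) by (simp add: mult.assoc)
qed (use assms mult_group.mult_mem[OF mult_group_squares] in blast)

lemma power_odd_nonsquare: "x \<in> H - squares \<Longrightarrow> odd n \<Longrightarrow> x ^ n \<in> H - squares"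
proof (intro DiffI)
  assume x: "x \<in> H - squares" and n: "odd n"
  obtain x' where x': "x' \<in> H" "x * x' = 1" using inverse_ex x by blast
  obtain j where j: "n = 2 * j + 1" using n oddE by blast
  have "x = x ^ n * (x' ^ j) ^ 2"
    using x'(2) by (simp add: j power_add power_mult_distrib[symmetric] power_mult mult_ac)
  moreover have "(x' ^ j) ^ 2 \<in> squares" using x'(1) power_mem by (auto simp: squares_def)
  ultimately show "x ^ n \<notin> squares"
    using x mult_group.mult_mem[OF mult_group_squares, of "x ^ n" "(x' ^ j) ^ 2"] by auto
qed (use power_mem in auto)

definition inverse_closed :: "'a set \<Rightarrow> bool" where
  "inverse_closed C \<longleftrightarrow> (\<forall>x\<in>C. \<forall>y\<in>H. x * y = 1 \<longrightarrow> y \<in> C)"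

lemma inverse_closed_squares_Diff: "inverse_closed (squares - {1, -1})"
  unfolding inverse_closed_def using inverse_mem_squares mult_eq_one_pm1 by blast

lemma inverse_closed_nonsquares_Diff: "inverse_closed (H - squares - {1, -1})"
proof (unfold inverse_closed_def, intro ballI impI)
  fix x y assume x: "x \<in> H - squares - {1, -1}" and y: "y \<in> H" "x * y = 1"
  have "y \<notin> squares" using inverse_mem_squares[of y x] x y by (auto simp: mult.commute)
  moreover have "y \<notin> {1, -1}" using mult_eq_one_pm1[OF y(2)] x by blast
  ultimately show "y \<in> H - squares - {1, -1}" using y by blast
qed

lemma subset_if_image_subset:
  assumes u_eq: "\<And>x y. x \<in> H \<Longrightarrow> y \<in> H \<Longrightarrow> u x = u y \<Longrightarrow> y = x \<or> x * y = 1"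
    and "X \<subseteq> H" "Y \<subseteq> H" "inverse_closed Y" "u ` X \<subseteq> u ` Y"
  shows "X \<subseteq> Y"
proof
  fix x assume x: "x \<in> X"
  then obtain y where y: "y \<in> Y" "u y = u x" using assms(5) by (metis imageE image_eqI subsetD)
  then have "x = y \<or> y * x = 1" using u_eq[of y x] assms(2,3) x by blast
  then show "x \<in> Y" using assms(2,4) x y(1) by (auto simp: inverse_closed_def)
qed

lemma inverse_closed_power_image:
  assumes "C \<subseteq> H" "inverse_closed C"
  shows "inverse_closed ((\<lambda>x. x ^ k) ` C)"
  unfolding inverse_closed_def
proof (intro ballI impI)
  fix x y assume x: "x \<in> (\<lambda>x. x ^ k) ` C" and y: "y \<in> H" "x * y = 1"
  then obtain c where c: "c \<in> C" "x = c ^ k" by auto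
  obtain c' where c': "c' \<in> H" "c * c' = 1" using inverse_ex assms(1) c(1) by blast
  then have "c' \<in> C" "x * c' ^ k = 1"
    using assms(2) c by (auto simp: inverse_closed_def power_mult_distrib[symmetric])
  then show "y \<in> (\<lambda>x. x ^ k) ` C" using mult_inverse_unique[OF y(2)] by blast
qed

lemma bij_betw_image_iff:
  fixes u :: "'a \<Rightarrow> 'c" and g :: "'c \<Rightarrow> 'c"
  assumes u_eq: "\<And>x y. x \<in> H \<Longrightarrow> y \<in> H \<Longrightarrow> u x = u y \<Longrightarrow> y = x \<or> x * y = 1"
    and g_u: "\<And>x. x \<in> H \<Longrightarrow> g (u x) = u (x ^ k)"
    and C: "C \<subseteq> H" "inverse_closed C"
  shows "bij_betw g (u ` C) (u ` C) \<longleftrightarrow> bij_betw (\<lambda>x. x ^ k) C C"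
proof -
  let ?p = "\<lambda>x. x ^ k"
  have pC: "?p ` C \<subseteq> H" using C(1) power_mem by auto
  have "?p ` C \<subseteq> C" if "u ` ?p ` C = u ` C"
    by (rule subset_if_image_subset[OF u_eq pC C equalityD1[OF that]])
  moreover have "C \<subseteq> ?p ` C" if "u ` ?p ` C = u ` C"
    by (rule subset_if_image_subset[OF u_eq C(1) pC inverse_closed_power_image[OF C]
          equalityD2[OF that]])
  ultimately have image_iff: "u ` ?p ` C = u ` C \<longleftrightarrow> ?p ` C = C" by blast
  have finite_C: "finite C" using C(1) finite_H finite_subset by blast
  have "bij_betw g (u ` C) (u ` C) \<longleftrightarrow> g ` u ` C = u ` C"
    by (rule bij_betw_self_iff_image_eq) (use finite_C in simp)
  also have "g ` u ` C = u ` ?p ` C" using C(1) g_u by (force simp: image_image)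
  also have "u ` ?p ` C = u ` C \<longleftrightarrow> bij_betw ?p C C"
    unfolding image_iff using finite_C by (rule bij_betw_self_iff_image_eq[symmetric])
  finally show ?thesis .
qed

end

locale mult_group_pm1 = mult_group +
  assumes minus_one_mem: "-1 \<in> H" and one_neq_minus_one: "(1::'a) \<noteq> -1"
    and square_eq_one: "\<And>x. x \<in> H \<Longrightarrow> x ^ 2 = 1 \<Longrightarrow> x = 1 \<or> x = -1"
begin

lemma minus_mem: "x \<in> H \<Longrightarrow> -x \<in> H"
  using mult_mem[OF minus_one_mem] by fastforce

lemma minus_neq_self: "x \<in> H \<Longrightarrow> -x \<noteq> x"
  using inverse_ex one_neq_minus_one by (metis minus_mult_left mult_1_left)

lemma square_eq_square_iff:
  assumes "x \<in> H" "y \<in> H"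
  shows "x ^ 2 = y ^ 2 \<longleftrightarrow> y = x \<or> y = -x"
proof
  assume eq: "x ^ 2 = y ^ 2"
  obtain x' where x': "x' \<in> H" "x * x' = 1" using inverse_ex assms(1) by blast
  have "(y * x') ^ 2 = (x * x') ^ 2" by (simp add: power_mult_distrib eq)
  then have "y * x' = 1 \<or> y * x' = -1" using square_eq_one mult_mem assms(2) x' by simp
  then show "y = x \<or> y = -x"
    using x'(2) mult_inverse_unique[of x']
      by (metis minus_equation_iff minus_mult_left mult.commute)
qed auto

lemma card_eq_double_card_squares: "card H = 2 * card squares"
  unfolding squares_def
proof (rule card_eq_double_card_image[OF finite_H])
  fix x assume x: "x \<in> H"
  have "y ^ 2 = x ^ 2 \<longleftrightarrow> y = x \<or> y = -x" if "y \<in> H" for y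
    using square_eq_square_iff[OF x that] by auto
  then have "{y \<in> H. y ^ 2 = x ^ 2} = {x, -x}" using x minus_mem[OF x] by auto
  then show "card {y \<in> H. y ^ 2 = x ^ 2} = 2" using minus_neq_self[OF x] by auto
qed

lemma mult_nonsquares:
  assumes x: "x \<in> H - squares" and y: "y \<in> H - squares"
  shows "x * y \<in> squares"
proof -
  have "(*) x ` squares \<subseteq> H - squares"
    using x squares_subset mult_mem mult_square_mem_squares_iff by auto
  moreover have "inj_on ((*) x) squares"
    using x mem_mult_left_cancel by (auto intro: inj_onI)
  then have "card ((*) x ` squares) = card (H - squares)"
    using card_eq_double_card_squares card_Diff_subset[OF _ squares_subset] finite_H
    by (simp add: card_image finite_subset[OF squares_subset])
  ultimately have "(*) x ` squares = H - squares"
    using finite_H by (simp add: card_subset_eq)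
  then obtain s where s: "s \<in> squares" "y = x * s" using y by blast
  then have "x * y = x ^ 2 * s" by (simp add: power2_eq_square mult.assoc)
  moreover have "x ^ 2 \<in> squares" using x by (auto simp: squares_def)
  ultimately show ?thesis using s(1) mult_group.mult_mem[OF mult_group_squares] by simp
qed

lemma power_mem_pm1:
  assumes "card H = 2 * m" "m dvd k" "x \<in> H"
  shows "x ^ k \<in> {1, -1}"
proof -
  have "(x ^ m) ^ 2 = 1"
    using power_card_eq_one[OF assms(3)] assms(1) by (simp add: power_mult[symmetric] mult.commute)
  then have "x ^ m = 1 \<or> x ^ m = -1" using square_eq_one power_mem assms(3) by blast
  moreover obtain j where "k = m * j" using assms(2) by blast
  then have "x ^ k = (x ^ m) ^ j" by (simp add: power_mult)
  ultimately show ?thesis by (cases "even j") auto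
qed

lemma bij_betw_power_squares_iff:
  assumes ne: "squares - {1, -1} \<noteq> {}"
  shows "bij_betw (\<lambda>x. x ^ k) (squares - {1, -1}) (squares - {1, -1})
    \<longleftrightarrow> inj_on (\<lambda>x. x ^ k) squares"
proof (cases "-1 \<in> squares \<and> even k")
  case True
  obtain x where x: "x \<in> squares - {1, -1}" using ne by blast
  then have "-x \<in> squares - {1, -1}"
    using True mult_group.mult_mem[OF mult_group_squares, of "-1" x]
    by (auto simp: minus_equation_iff[of x])
  moreover have "(-x) ^ k = x ^ k" using True by simp
  moreover have "-x \<noteq> x" using x squares_subset minus_neq_self by blast
  ultimately have "\<not> inj_on (\<lambda>x. x ^ k) (squares - {1, -1})" using x by (meson inj_onD)
  moreover have "\<not> inj_on (\<lambda>x. x ^ k) squares"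
  proof
    assume inj: "inj_on (\<lambda>x. x ^ k) squares"
    have "(-1) ^ k = (1::'a) ^ k" using True by simp
    from inj_onD[OF inj this] True mult_group.one_mem[OF mult_group_squares] one_neq_minus_one
    show False by simp
  qed
  ultimately show ?thesis by (simp add: bij_betw_def)
next
  case False
  have "squares - {1, -1} = squares - squares \<inter> {1, -1}" by blast
  also have "bij_betw (\<lambda>x. x ^ k) \<dots> \<dots> \<longleftrightarrow> bij_betw (\<lambda>x. x ^ k) squares squares"
    using False mult_group.finite_H[OF mult_group_squares] power_mem_squares
    by (intro bij_betw_self_Diff_fixed_iff) auto
  also have "\<dots> \<longleftrightarrow> inj_on (\<lambda>x. x ^ k) squares"
    using mult_group.finite_H[OF mult_group_squares] power_mem_squares
    by (intro bij_betw_self_iff_inj_on) auto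
  finally show ?thesis .
qed

lemma inj_on_power_if_inj_on_nonsquares:
  assumes "odd k" "H - squares \<noteq> {}" and inj: "inj_on (\<lambda>x. x ^ k) (H - squares)"
  shows "inj_on (\<lambda>x. x ^ k) H"
  unfolding inj_on_power_iff_kernel
proof (intro ballI impI)
  obtain s where s: "s \<in> H - squares" using assms(2) by blast
  fix g assume g: "g \<in> H" "g ^ k = 1"
  \<comment> \<open>\<open>g = g ^ (k + 1)\<close> is a square as \<open>k\<close> is odd\<close>
  have "g \<in> squares" using power_even_mem_squares[OF g(1), of "k + 1"] g(2) assms(1) by simp
  then have "s * g \<in> H - squares" using s mult_mem mult_square_mem_squares_iff squares_subset
    by blast
  moreover have "(s * g) ^ k = s ^ k" using g(2) by (simp add: power_mult_distrib)
  ultimately have "s * g = s * 1" using inj s by (auto dest: inj_onD)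
  then show "g = 1" using s mem_mult_left_cancel by blast
qed

lemma bij_betw_power_nonsquares_iff:
  assumes ne: "H - squares - {1, -1} \<noteq> {}"
  shows "bij_betw (\<lambda>x. x ^ k) (H - squares - {1, -1}) (H - squares - {1, -1})
    \<longleftrightarrow> inj_on (\<lambda>x. x ^ k) H"
proof (cases "even k")
  case True
  obtain x where x: "x \<in> H - squares - {1, -1}" using ne by blast
  then have "x ^ k \<notin> H - squares - {1, -1}" using power_even_mem_squares True by blast
  then have "\<not> bij_betw (\<lambda>x. x ^ k) (H - squares - {1, -1}) (H - squares - {1, -1})"
    using x by (auto simp: bij_betw_def)
  moreover have "\<not> inj_on (\<lambda>x. x ^ k) H"
  proof
    assume inj: "inj_on (\<lambda>x. x ^ k) H"
    have "(-1) ^ k = (1::'a) ^ k" using True by simp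
    from inj_onD[OF inj this] one_mem minus_one_mem one_neq_minus_one
    show False by simp
  qed
  ultimately show ?thesis by blast
next
  case False
  have odd_maps: "(\<lambda>x. x ^ k) ` (H - squares) \<subseteq> H - squares"
    using power_odd_nonsquare False by blast
  have finite: "finite (H - squares)" using finite_H by blast
  have "H - squares - {1, -1} = (H - squares) - (H - squares) \<inter> {1, -1}" by blast
  also have "bij_betw (\<lambda>x. x ^ k) \<dots> \<dots> \<longleftrightarrow> bij_betw (\<lambda>x. x ^ k) (H - squares) (H - squares)"
    using False finite odd_maps by (intro bij_betw_self_Diff_fixed_iff) auto
  also have "\<dots> \<longleftrightarrow> inj_on (\<lambda>x. x ^ k) (H - squares)"
    using finite odd_maps by (rule bij_betw_self_iff_inj_on)
  also have "\<dots> \<longleftrightarrow> inj_on (\<lambda>x. x ^ k) H"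
    using inj_on_power_if_inj_on_nonsquares[OF False] ne by (auto intro: inj_on_subset)
  finally show ?thesis .
qed

lemma bij_betw_image_squares_iff:
  fixes u :: "'a \<Rightarrow> 'c" and g :: "'c \<Rightarrow> 'c"
  assumes u_eq: "\<And>x y. x \<in> H \<Longrightarrow> y \<in> H \<Longrightarrow> u x = u y \<Longrightarrow> y = x \<or> x * y = 1"
    and g_u: "\<And>x. x \<in> H \<Longrightarrow> g (u x) = u (x ^ k)"
    and ne: "u ` (squares - {1, -1}) \<noteq> {}"
  shows "bij_betw g (u ` (squares - {1, -1})) (u ` (squares - {1, -1}))
    \<longleftrightarrow> coprime k (card squares)"
proof -
  have "bij_betw g (u ` (squares - {1, -1})) (u ` (squares - {1, -1}))
      \<longleftrightarrow> bij_betw (\<lambda>x. x ^ k) (squares - {1, -1}) (squares - {1, -1})"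
    using squares_subset
    by (intro bij_betw_image_iff[where u = u and g
      = g, OF u_eq g_u _ inverse_closed_squares_Diff]) auto
  also have "\<dots> \<longleftrightarrow> inj_on (\<lambda>x. x ^ k) squares"
    using ne by (intro bij_betw_power_squares_iff) blast
  also have "\<dots> \<longleftrightarrow> coprime k (card squares)"
    by (rule mult_group.inj_on_power_iff_coprime[OF mult_group_squares])
  finally show ?thesis .
qed

lemma bij_betw_image_nonsquares_iff:
  fixes u :: "'a \<Rightarrow> 'c" and g :: "'c \<Rightarrow> 'c"
  assumes u_eq: "\<And>x y. x \<in> H \<Longrightarrow> y \<in> H \<Longrightarrow> u x = u y \<Longrightarrow> y = x \<or> x * y = 1"
    and g_u: "\<And>x. x \<in> H \<Longrightarrow> g (u x) = u (x ^ k)"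
    and ne: "u ` (H - squares - {1, -1}) \<noteq> {}"
  shows "bij_betw g (u ` (H - squares - {1, -1})) (u ` (H - squares - {1, -1}))
    \<longleftrightarrow> coprime k (card H)"
proof -
  have "bij_betw g (u ` (H - squares - {1, -1})) (u ` (H - squares - {1, -1}))
      \<longleftrightarrow> bij_betw (\<lambda>x. x ^ k) (H - squares - {1, -1}) (H - squares - {1, -1})"
    by (intro bij_betw_image_iff[where u = u and g
      = g, OF u_eq g_u _ inverse_closed_nonsquares_Diff])
      auto
  also have "\<dots> \<longleftrightarrow> inj_on (\<lambda>x. x ^ k) H"
    using ne by (intro bij_betw_power_nonsquares_iff) blast
  also have "\<dots> \<longleftrightarrow> coprime k (card H)"
    by (rule inj_on_power_iff_coprime)
  finally show ?thesis .
qed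

end

section \<open>Chebyshev polynomials and the Joukowsky map\<close>

lemma cheb_sum_power:
  fixes z w x :: "'a::comm_ring_1"
  assumes zw: "z * w = 1" and x: "2 * x = z + w"
  shows "2 * cheb k x = z ^ k + w ^ k"
  using x
proof (induction k x rule: cheb.induct)
  case (3 n x)
  have "2 * cheb (Suc (Suc n)) x = (2 * x) * (2 * cheb (Suc n) x) - 2 * cheb n x"
    by (simp add: algebra_simps)
  also have "\<dots> = (z + w) * (z ^ Suc n + w ^ Suc n) - (z ^ n + w ^ n)"
    using 3 by simp
  also have "\<dots> = z ^ Suc (Suc n) + w ^ Suc (Suc n) + (z * w) * (z ^ n + w ^ n) - (z ^ n + w ^ n)"
    by (simp add: algebra_simps)
  finally show ?case using zw by simp
qed (use zw in simp_all)

lemma cheb_one: "cheb k (1::'a::comm_ring_1) = 1"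
  by (induction k "1::'a" rule: cheb.induct) simp_all

lemma cheb_minus_one: "cheb k (-1::'a::comm_ring_1) = (-1) ^ k"
  by (induction k "-1::'a" rule: cheb.induct) (simp_all add: algebra_simps)

definition joukowsky :: "'a::field \<Rightarrow> 'a" where
  "joukowsky l = (l + inverse l) / 2"

lemma cheb_joukowsky:
  fixes l :: "'a::field"
  assumes "(2::'a) \<noteq> 0" "l \<noteq> 0"
  shows "cheb k (joukowsky l) = joukowsky (l ^ k)"
proof -
  have "2 * cheb k (joukowsky l) = l ^ k + inverse l ^ k"
    by (rule cheb_sum_power) (use assms in \<open>simp_all add: joukowsky_def\<close>)
  then show ?thesis using assms(1) by (simp add: joukowsky_def power_inverse field_simps)
qed

lemma joukowsky_eq_imp:
  fixes l m :: "'a::field"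
  assumes "(2::'a) \<noteq> 0" "l \<noteq> 0" "m \<noteq> 0" "joukowsky l = joukowsky m"
  shows "m = l \<or> l * m = 1"
proof -
  have double: "2 * joukowsky x = x + inverse x" for x :: 'a
    using assms(1) by (simp add: joukowsky_def)
  have "l + inverse l = m + inverse m" using double[of l] double[of m] assms(4) by simp
  moreover have "(l - m) * (l * m - 1) = l * m * ((l + inverse l) - (m + inverse m))"
    using assms(2,3) by (simp add: field_simps)
  ultimately have "(l - m) * (l * m - 1) = 0" by simp
  then show ?thesis by auto
qed

lemma joukowsky_one_minus_one:
  assumes "(2::'a::field) \<noteq> 0"
  shows "joukowsky (1::'a) = 1" "joukowsky (-1::'a) = -1"
  using assms by (simp_all add: joukowsky_def)

section \<open>The quadratic extension and its norm-one circle\<close>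

definition qext_const :: "'a::field" where
  "qext_const = (SOME c. c \<noteq> 0 \<and> \<not> (\<exists>b. b ^ 2 = c))"

text \<open>For a field in which \<open>c = qext_const\<close> is a nonsquare, \<open>'a qext\<close> is the quadratic
  extension obtained by adjoining \<open>\<surd>c\<close>; \<open>QExt a b\<close> stands for \<open>a + b \<surd>c\<close>.\<close>
datatype 'a qext = QExt (re: 'a) (im: 'a)

lemma qext_eq_iff: "z = w \<longleftrightarrow> re z = re w \<and> im z = im w"
  by (cases z; cases w) auto

instantiation qext :: (field) comm_ring_1
begin
definition "0 = QExt 0 0"
definition "1 = QExt 1 0"
definition "z + w = QExt (re z + re w) (im z + im w)"
definition "- z = QExt (- re z) (- im z)"
definition "z - w = QExt (re z - re w) (im z - im w)"
definition "z * w = QExt (re z * re w + qext_const * (im z * im w)) (re z * im w + im z * re w)"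
instance
  by standard (auto simp: qext_eq_iff zero_qext_def one_qext_def plus_qext_def uminus_qext_def
      minus_qext_def times_qext_def algebra_simps)
end

lemma qext_simps [simp]:
  "re 0 = 0" "im 0 = 0" "re 1 = 1" "im 1 = 0"
  "re (z + w) = re z + re w" "im (z + w) = im z + im w"
  "re (- z) = - re z" "im (- z) = - im z"
  "re (z - w) = re z - re w" "im (z - w) = im z - im w"
  "re (z * w) = re z * re w + qext_const * (im z * im w)" "im (z * w) = re z * im w + im z * re w"
  by (simp_all add: zero_qext_def one_qext_def plus_qext_def uminus_qext_def minus_qext_def
      times_qext_def)

lemma re_two [simp]: "re (2::'a::field qext) = 2" and im_two [simp]: "im (2::'a qext) = 0"
proof -
  have two: "(2::'a qext) = 1 + 1" by simp
  show "re (2::'a qext) = 2" "im (2::'a qext) = 0" unfolding two qext_simps by simp_all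
qed

lemma re_power2: "re (z ^ 2) = re z ^ 2 + qext_const * im z ^ 2"
  and im_power2: "im (z ^ 2) = 2 * re z * im z"
  by (simp_all add: power2_eq_square algebra_simps)

instance qext :: (finite) finite
proof
  have "z \<in> (\<lambda>(a, b). QExt a b) ` UNIV" for z :: "'a qext"
    by (rule image_eqI[of _ _ "(re z, im z)"]) simp_all
  then have "(UNIV :: 'a qext set) = (\<lambda>(a, b). QExt a b) ` UNIV" by blast
  then show "finite (UNIV :: 'a qext set)" by (metis finite finite_imageI)
qed

definition qconj :: "'a::field qext \<Rightarrow> 'a qext" where
  "qconj z = QExt (re z) (- im z)"

definition qnorm :: "'a::field qext \<Rightarrow> 'a" where
  "qnorm z = re z ^ 2 - qext_const * im z ^ 2"

lemma qconj_mult: "qconj (z * w) = qconj z * qconj w"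
  by (simp add: qconj_def qext_eq_iff algebra_simps)

lemma qconj_power: "qconj (z ^ n) = qconj z ^ n"
  by (induction n) (simp_all add: qconj_mult, simp add: qconj_def qext_eq_iff)

lemma qnorm_mult: "qnorm (z * w) = qnorm z * qnorm w"
  by (simp add: qnorm_def power2_eq_square algebra_simps)

definition circle :: "'a::field qext set" where
  "circle = {z. qnorm z = 1}"

lemma mult_qconj_circle: "z \<in> circle \<Longrightarrow> z * qconj z = 1"
  by (simp add: circle_def qnorm_def qconj_def qext_eq_iff power2_eq_square)

lemma cheb_re:
  fixes z :: "'a::field qext"
  assumes "(2::'a) \<noteq> 0" "z \<in> circle"
  shows "cheb k (re z) = re (z ^ k)"
proof -
  have embed: "cheb k (QExt a 0) = QExt (cheb k a) 0" for a :: 'a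
    by (induction k a rule: cheb.induct) (simp_all add: qext_eq_iff)
  have "2 * cheb k (QExt (re z) 0) = z ^ k + qconj z ^ k"
    using mult_qconj_circle[OF assms(2)]
    by (intro cheb_sum_power) (simp_all add: qext_eq_iff qconj_def)
  then have "re (2 * cheb k (QExt (re z) 0)) = re (z ^ k + qconj (z ^ k))"
    by (simp add: qconj_power)
  then have "2 * cheb k (re z) = 2 * re (z ^ k)" by (simp add: embed qconj_def)
  then show ?thesis using assms(1) by simp
qed

text \<open>The line through \<open>-1\<close> with slope \<open>t\<close> meets the conic \<open>a\<^sup>2 - c b\<^sup>2 = 1\<close> again at
  \<open>circle_param t\<close>.\<close>
definition circle_param :: "'a::field \<Rightarrow> 'a qext" where
  "circle_param t =
     QExt ((1 + qext_const * t ^ 2) / (1 - qext_const * t ^ 2)) (2 * t / (1 - qext_const * t ^ 2))"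

lemma leg_eq_0_iff: "leg (a::'a::field) = 0 \<longleftrightarrow> a = 0"
  by (simp add: leg_def)

lemma leg_cases: "leg (a::'a::field) \<in> {-1, 0, 1}"
  by (simp add: leg_def)

lemma exists_sqrt_if_leg_neq_minus_one: "leg (a::'a::field) \<noteq> -1 \<Longrightarrow> \<exists>s. s ^ 2 = a"
  by (cases "a = 0") (auto simp: leg_def split: if_splits)

lemma Aset_disjoint: "(e1, e2) \<noteq> (f1, f2) \<Longrightarrow> Aset lam e1 e2 \<inter> Aset lam f1 f2 = {}"
  by (auto simp: Aset_def)

lemma Aset_subset_Diff_pm1:
  "e1 \<noteq> 0 \<Longrightarrow> e2 \<noteq> 0 \<Longrightarrow> Aset (1::'a::field) e1 e2 \<subseteq> UNIV - {1, -1}"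
  by (auto simp: Aset_def leg_def)

section \<open>Finite fields of odd order\<close>

locale odd_field =
  fixes ty :: "'a::{finite,field} itself"
  assumes odd_card: "odd (card (UNIV :: 'a set))"
begin

lemma two_neq_zero: "(2::'a) \<noteq> 0"
  using two_neq_zero_if_odd_card odd_card .

lemma one_neq_minus_one: "(1::'a) \<noteq> -1"
  using two_neq_zero by (metis one_add_one add.right_inverse)

sublocale units: mult_group_pm1 "UNIV - {0::'a}"
proof
  show "\<exists>y\<in>UNIV - {0}. x * y = 1" if "x \<in> UNIV - {0::'a}" for x
    using that by (intro bexI[of _ "inverse x"]) auto
qed (use one_neq_minus_one in \<open>auto simp: power2_eq_1_iff\<close>)

lemma leg_eq_1_iff: "leg a = 1 \<longleftrightarrow> a \<in> units.squares"
proof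
  assume "leg a = 1"
  then obtain b where "b ^ 2 = a" "a \<noteq> 0" by (auto simp: leg_def split: if_splits)
  then show "a \<in> units.squares" by (auto simp: units.squares_def)
qed (auto simp: units.squares_def leg_def)

lemma leg_eq_minus_1_iff: "leg a = -1 \<longleftrightarrow> a \<in> UNIV - {0} - units.squares"
  using leg_eq_1_iff[of a] leg_cases[of a] leg_eq_0_iff[of a] by auto

lemma leg_mult: "leg (a * b) = leg a * leg (b::'a)"
proof (cases "a = 0 \<or> b = 0")
  case False
  then have ab: "a \<in> UNIV - {0}" "b \<in> UNIV - {0}" by auto
  have leg_unit: "leg x = (if x \<in> units.squares then 1 else -1)" if "x \<noteq> 0" for x :: 'a
    using that leg_eq_1_iff leg_eq_minus_1_iff by auto
  have "a * b \<in> units.squares \<longleftrightarrow> (a \<in> units.squares \<longleftrightarrow> b \<in> units.squares)"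
  proof (cases "b \<in> units.squares")
    case True
    then show ?thesis using units.mult_square_mem_squares_iff[OF ab(1) True] by simp
  next
    case False
    then show ?thesis
      using units.mult_nonsquares[of a b] units.mult_square_mem_squares_iff[OF ab(2), of a] ab
      by (auto simp: mult.commute)
  qed
  then show ?thesis using False by (simp add: leg_unit)
qed (auto simp: leg_def)

lemma leg_mult_square: "b \<noteq> 0 \<Longrightarrow> leg (a * b ^ 2) = leg (a::'a)"
  using leg_eq_1_iff[of "b ^ 2"] by (simp add: leg_mult units.squares_def)

lemma leg_two_cases: "leg (2::'a) = 1 \<or> leg (2::'a) = -1"
  and leg_minus_one_cases: "leg (-1::'a) = 1 \<or> leg (-1::'a) = -1"
  using leg_cases[of "2::'a"] leg_cases[of "-1::'a"] two_neq_zero by (auto simp: leg_eq_0_iff)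

lemma leg_qext_const: "leg (qext_const::'a) = -1"
proof -
  have "card units.squares > 0"
    using units.one_mem_squares by (auto simp: card_gt_0_iff)
  then have "card units.squares < card (UNIV - {0::'a})"
    using units.card_eq_double_card_squares by linarith
  then have "\<not> UNIV - {0} \<subseteq> units.squares"
    using card_mono[of units.squares "UNIV - {0::'a}"] by auto
  then have "\<exists>c::'a. c \<noteq> 0 \<and> \<not> (\<exists>b. b ^ 2 = c)"
    by (auto simp: units.squares_def)
  from someI_ex[OF this] show ?thesis by (simp add: qext_const_def leg_def)
qed

lemma qext_const_neq_zero: "(qext_const::'a) \<noteq> 0"
  using leg_qext_const by (auto simp: leg_def)

lemma qext_const_neq_square: "(qext_const::'a) \<noteq> b ^ 2"
proof
  assume "qext_const = b ^ 2"
  then have "\<exists>c. c ^ 2 = (qext_const::'a)" by metis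
  then show False using leg_qext_const by (simp add: leg_def split: if_splits)
qed

sublocale circle: mult_group_pm1 "circle :: 'a qext set"
proof
  show "finite (circle :: 'a qext set)" by simp
  show "x * y \<in> circle" if "x \<in> circle" "y \<in> circle" for x y :: "'a qext"
    using that by (simp add: circle_def qnorm_mult)
  show "\<exists>y\<in>circle. x * y = 1" if "x \<in> circle" for x :: "'a qext"
    using that mult_qconj_circle
    by (intro bexI[of _ "qconj x"]) (auto simp: circle_def qnorm_def qconj_def)
  show "(1::'a qext) \<noteq> -1" using one_neq_minus_one by (simp add: qext_eq_iff)
  show "x = 1 \<or> x = -1" if "x \<in> circle" "x ^ 2 = 1" for x :: "'a qext"
  proof -
    have "re x ^ 2 + qext_const * im x ^ 2 = 1" "re x ^ 2 - qext_const * im x ^ 2 = 1"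
      using that by (auto simp: circle_def qnorm_def qext_eq_iff power2_eq_square)
    then have "2 * (qext_const * im x ^ 2) = 0" by (simp add: algebra_simps)
    then have "im x = 0" using two_neq_zero qext_const_neq_zero by simp
    then have "re x ^ 2 = 1" using that by (simp add: circle_def qnorm_def)
    then show ?thesis using \<open>im x = 0\<close> by (auto simp: power2_eq_1_iff qext_eq_iff)
  qed
qed (auto simp: circle_def qnorm_def)

lemma re_circle_eq_imp:
  assumes "z \<in> circle" "w \<in> circle" "re z = re (w::'a qext)"
  shows "w = z \<or> z * w = 1"
proof -
  have "qext_const * im z ^ 2 = qext_const * im w ^ 2"
    using assms by (simp add: circle_def qnorm_def algebra_simps)
  then have "im z = im w \<or> im z = - im w" using qext_const_neq_zero by (simp add: power2_eq_iff)
  then have "im w = im z \<or> im w = - im z" by auto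
  then have "w = z \<or> w = qconj z" using assms(3) by (auto simp: qext_eq_iff qconj_def)
  then show ?thesis using mult_qconj_circle[OF assms(1)] by blast
qed

lemma circle_param_denom_neq_zero: "1 - qext_const * (t::'a) ^ 2 \<noteq> 0"
proof
  assume "1 - qext_const * t ^ 2 = 0"
  then have "qext_const * t ^ 2 = 1" by simp
  then have "t \<noteq> 0" "qext_const = (1 / t) ^ 2" by (auto simp: power_divide eq_divide_eq)
  then show False using qext_const_neq_square by blast
qed

lemma circle_param_mem: "circle_param (t::'a) \<in> circle"
proof -
  let ?d = "1 - qext_const * t ^ 2"
  have "((1 + qext_const * t ^ 2) / ?d) ^ 2 - qext_const * (2 * t / ?d) ^ 2
      = ((1 + qext_const * t ^ 2) ^ 2 - qext_const * (2 * t) ^ 2) / ?d ^ 2"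
    by (simp add: power_divide diff_divide_distrib)
  also have "(1 + qext_const * t ^ 2) ^ 2 - qext_const * (2 * t) ^ 2 = ?d ^ 2"
    by (simp add: power2_eq_square algebra_simps)
  finally have "((1 + qext_const * t ^ 2) / ?d) ^ 2 - qext_const * (2 * t / ?d) ^ 2 = 1"
    using circle_param_denom_neq_zero[of t] by simp
  then show ?thesis by (simp add: circle_def qnorm_def circle_param_def)
qed

lemma one_plus_re_circle_param: "1 + re (circle_param t) = 2 / (1 - qext_const * (t::'a) ^ 2)"
  using circle_param_denom_neq_zero[of t] by (simp add: circle_param_def field_simps)

lemma circle_param_neq_minus_one: "circle_param (t::'a) \<noteq> -1"
proof
  assume "circle_param t = -1"
  then have "1 + re (circle_param t) = 0" by simp
  then show False
    using one_plus_re_circle_param[of t] circle_param_denom_neq_zero[of t] two_neq_zero by simp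
qed

lemma slope_circle_param: "im (circle_param t) / (1 + re (circle_param t)) = (t::'a)"
  using circle_param_denom_neq_zero[of t] two_neq_zero
  by (simp add: one_plus_re_circle_param) (simp add: circle_param_def field_simps)

lemma circle_eq_one_iff: "(z::'a qext) \<in> circle \<Longrightarrow> z = 1 \<longleftrightarrow> re z = 1"
  using re_circle_eq_imp[OF _ circle.one_mem, of z] by auto

lemma circle_eq_minus_one_iff: "(z::'a qext) \<in> circle \<Longrightarrow> z = -1 \<longleftrightarrow> re z = -1"
  using re_circle_eq_imp[OF _ circle.minus_one_mem, of z] mult_eq_one_pm1[of z "-1"]
    one_neq_minus_one by auto

lemma circle_param_slope:
  assumes z: "(z::'a qext) \<in> circle" and "z \<noteq> -1"
  shows "circle_param (im z / (1 + re z)) = z"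
proof -
  define a b where "a = re z" and "b = im z"
  have cb: "qext_const * b ^ 2 = (a - 1) * (a + 1)"
    using z by (simp add: circle_def qnorm_def a_def b_def power2_eq_square algebra_simps)
  have "re z \<noteq> -1" using circle_eq_minus_one_iff[OF z] \<open>z \<noteq> -1\<close> by simp
  then have a1: "a + 1 \<noteq> 0" by (simp add: a_def add_eq_0_iff2)
  define t where "t = b / (1 + a)"
  have "qext_const * t ^ 2 = qext_const * b ^ 2 / (a + 1) ^ 2"
    by (simp add: t_def power_divide add.commute)
  also have "\<dots> = (a - 1) / (a + 1)" unfolding cb using a1 by (simp add: power2_eq_square)
  finally have "qext_const * t ^ 2 = (a - 1) / (a + 1)" .
  then have d: "1 - qext_const * t ^ 2 = 2 / (a + 1)" and n: "1 + qext_const * t ^ 2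
    = 2 * a / (a + 1)"
    using a1 by (simp_all add: field_simps)
  have "(1 + qext_const * t ^ 2) / (1 - qext_const * t ^ 2)
    = a" "2 * t / (1 - qext_const * t ^ 2) = b"
    unfolding n d using a1 two_neq_zero by (simp_all add: t_def add.commute)
  then show ?thesis by (simp add: circle_param_def qext_eq_iff a_def b_def t_def)
qed

lemma card_circle: "card (circle :: 'a qext set) = card (UNIV :: 'a set) + 1"
proof -
  have "bij_betw circle_param UNIV (circle - {-1 :: 'a qext})"
  proof (rule bij_betw_byWitness[where f' = "\<lambda>z. im z / (1 + re z)"])
    show "circle_param ` UNIV \<subseteq> circle - {-1 :: 'a qext}"
      using circle_param_mem circle_param_neq_minus_one by auto
  qed (auto simp: slope_circle_param circle_param_slope)
  then have "card (circle - {-1 :: 'a qext}) = card (UNIV :: 'a set)"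
    by (simp add: bij_betw_same_card)
  moreover have "card (circle :: 'a qext set) > 0"
    using circle.minus_one_mem circle.finite_H card_gt_0_iff by blast
  ultimately show ?thesis using circle.minus_one_mem by (simp add: card_Diff_singleton)
qed

lemma minus_one_mem_circle_squares_iff: "(-1::'a qext) \<in> circle.squares \<longleftrightarrow> leg (-1::'a) = -1"
proof
  assume "-1 \<in> circle.squares"
  then obtain y :: "'a qext" where y: "y \<in> circle" "y ^ 2 = -1" by (auto simp: circle.squares_def)
  then have e: "re y ^ 2 + qext_const * im y ^ 2 = -1" "re y ^ 2 - qext_const * im y ^ 2 = 1"
    by (auto simp: qext_eq_iff power2_eq_square circle_def qnorm_def)
  have "2 * (qext_const * im y ^ 2)
      = (re y ^ 2 + qext_const * im y ^ 2) - (re y ^ 2 - qext_const * im y ^ 2)"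
    by simp
  then have "2 * (qext_const * im y ^ 2) = 2 * (-1)" using e by simp
  then have c: "qext_const * im y ^ 2 = -1" using mult_left_cancel[OF two_neq_zero] by blast
  then have "im y \<noteq> 0" by auto
  then show "leg (-1::'a) = -1" using c[symmetric] leg_qext_const
    by (simp add: leg_mult_square)
next
  assume "leg (-1::'a) = -1"
  then have "leg (- qext_const::'a) = 1" using leg_qext_const leg_mult[of "-1" qext_const]
    by simp
  then obtain s where s: "s ^ 2 = - (qext_const::'a)" using exists_sqrt_if_leg_neq_minus_one
    by force
  define r where "r = s / qext_const"
  have c: "qext_const * r ^ 2 = -1"
    using s qext_const_neq_zero by (simp add: r_def power_divide power2_eq_square)
  then have "QExt 0 r \<in> circle" "QExt 0 r ^ 2 = -1"
    by (simp_all add: circle_def qnorm_def power2_eq_square qext_eq_iff)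
  then show "-1 \<in> circle.squares" unfolding circle.squares_def by force
qed

lemma leg_re_circle:
  assumes "(z::'a qext) \<in> circle - {1, -1}"
  shows "leg (re z - 1) * leg (re z + 1) = -1"
proof -
  have "re z \<noteq> 1" "re z \<noteq> -1"
    using assms circle_eq_one_iff[of z] circle_eq_minus_one_iff[of z] by auto
  then have "im z \<noteq> 0" using assms by (auto simp: circle_def qnorm_def power2_eq_1_iff)
  moreover have "(re z - 1) * (re z + 1) = qext_const * im z ^ 2"
    using assms by (simp add: circle_def qnorm_def power2_eq_square algebra_simps)
  ultimately show ?thesis by (metis leg_mult leg_mult_square leg_qext_const)
qed

lemma circle_square_root:
  assumes z: "(z::'a qext) \<in> circle" and s: "s ^ 2 = 2 * (re z + 1)" "s \<noteq> 0"
  shows "QExt (s / 2) (im z / s) \<in> circle" "QExt (s / 2) (im z / s) ^ 2 = z"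
proof -
  define a b where "a = re z" and "b = im z"
  have cb: "qext_const * b ^ 2 = (a - 1) * (a + 1)"
    using z by (simp add: circle_def qnorm_def a_def b_def power2_eq_square algebra_simps)
  have a1: "a + 1 \<noteq> 0"
  proof
    assume a: "a + 1 = 0"
    have "s ^ 2 = 2 * (a + 1)" using s(1) by (simp only: a_def)
    then have "s ^ 2 = 0" by (simp only: a mult_zero_right)
    then show False using s(2) by simp
  qed
  \<comment> \<open>\<open>(s / 2)\<^sup>2 = (a + 1) / 2\<close> and \<open>c (b / s)\<^sup>2 = (a - 1) / 2\<close>: their difference is the norm \<open>1\<close>,
    their sum is the real part \<open>a\<close> of the square\<close>
  have "(s / 2) ^ 2 = 2 * (a + 1) / (2 * 2)"
    by (simp only: power_divide s a_def) (simp add: power2_eq_square)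
  also have "\<dots> = (a + 1) / 2" by (rule mult_divide_mult_cancel_left[OF two_neq_zero])
  finally have s2: "(s / 2) ^ 2 = (a + 1) / 2" .
  have "qext_const * (b / s) ^ 2 = (a - 1) * (a + 1) / (2 * (a + 1))"
    by (simp only: power_divide times_divide_eq_right cb s a_def)
  also have "\<dots> = (a - 1) / 2" using a1 by (rule mult_divide_mult_cancel_right)
  finally have cbs: "qext_const * (b / s) ^ 2 = (a - 1) / 2" .
  have "(a + 1) / 2 - (a - 1) / 2 = (1::'a)" "(a + 1) / 2 + (a - 1) / 2 = a"
    using two_neq_zero by (simp flip: diff_divide_distrib, simp flip: add_divide_distrib mult_2)
  then have "QExt (s / 2) (b / s) \<in> circle" "re (QExt (s / 2) (b / s) ^ 2) = a"
    by (simp_all add: circle_def qnorm_def s2 cbs re_power2)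
  moreover have "im (QExt (s / 2) (b / s) ^ 2) = b"
    using s two_neq_zero by (simp add: im_power2)
  ultimately show "QExt (s / 2) (im z / s) \<in> circle" "QExt (s / 2) (im z / s) ^ 2 = z"
    by (simp_all add: qext_eq_iff a_def b_def)
qed

lemma circle_squares_iff:
  assumes z: "(z::'a qext) \<in> circle" "z \<noteq> -1"
  shows "z \<in> circle.squares \<longleftrightarrow> leg (re z + 1) = leg (2::'a)"
proof -
  have z1: "re z + 1 \<noteq> 0" using z circle_eq_minus_one_iff by (simp add: add_eq_0_iff2)
  show ?thesis
  proof
    assume "z \<in> circle.squares"
    then obtain y where y: "y \<in> circle" "z = y ^ 2" by (auto simp: circle.squares_def)
    then have "re z + 1 = 2 * re y ^ 2"
      by (simp add: circle_def qnorm_def power2_eq_square algebra_simps)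
    then show "leg (re z + 1) = leg (2::'a)" using z1 by (simp add: leg_mult_square)
  next
    assume "leg (re z + 1) = leg (2::'a)"
    then have "leg (2::'a) * leg (re z + 1) = 1" using leg_two_cases by auto
    then have "leg (2 * (re z + 1)) = 1" by (simp only: leg_mult)
    then obtain s where s: "s ^ 2 = 2 * (re z + 1)" using exists_sqrt_if_leg_neq_minus_one by force
    moreover have "s \<noteq> 0" using s z1 two_neq_zero by (metis mult_eq_0_iff zero_power2)
    ultimately have "QExt (s / 2) (im z / s) \<in> circle" "z = QExt (s / 2) (im z / s) ^ 2"
      using circle_square_root[OF z(1)] by auto
    then show "z \<in> circle.squares" unfolding circle.squares_def by (rule rev_image_eqI)
  qed
qed

lemma re_mem_Aset:
  assumes z: "(z::'a qext) \<in> circle - {1, -1}"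
  shows "z \<in> circle.squares \<Longrightarrow> re z \<in> Aset 1 (- leg (2::'a)) (leg (2::'a))"
    and "z \<notin> circle.squares \<Longrightarrow> re z \<in> Aset 1 (leg (2::'a)) (- leg (2::'a))"
  using leg_re_circle[OF z] circle_squares_iff[of z] z leg_two_cases
    leg_cases[of "re z - 1"] leg_cases[of "re z + 1"]
  by (auto simp: Aset_def)

lemma joukowsky_mem_Aset:
  assumes "l \<notin> {0, 1, -1::'a}"
  shows "joukowsky l \<in> Aset 1 (leg (2::'a) * leg l) (leg (2::'a) * leg l)"
proof -
  have "(2::'a) * 2 \<noteq> 0" using two_neq_zero no_zero_divisors by blast
  then have "(4::'a) \<noteq> 0" by simp
  then have eqs: "joukowsky l - 1 = (2 * l) * ((l - 1) / (2 * l)) ^ 2"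
    "joukowsky l + 1 = (2 * l) * ((l + 1) / (2 * l)) ^ 2"
    using assms two_neq_zero by (simp_all add: joukowsky_def power2_eq_square field_simps)
  moreover have "(l - 1) / (2 * l) \<noteq> 0" "(l + 1) / (2 * l) \<noteq> 0"
    using assms two_neq_zero by (auto simp: add_eq_0_iff2)
  ultimately have "leg (joukowsky l - 1) = leg (2 * l)" "leg (joukowsky l + 1) = leg (2 * l)"
    by (metis leg_mult_square)+
  then show ?thesis by (simp add: Aset_def leg_mult)
qed

lemma range_joukowsky_Un_re: "joukowsky ` (UNIV - {0}) \<union> re ` circle = (UNIV :: 'a set)"
proof -
  have "u \<in> joukowsky ` (UNIV - {0}) \<union> re ` circle" for u :: 'a
  proof (cases "leg (u ^ 2 - 1) = -1")
    case True
    then have "leg ((u ^ 2 - 1) * qext_const) = 1" using leg_qext_const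
      by (simp add: leg_mult)
    then obtain s where s: "s ^ 2 = (u ^ 2 - 1) * qext_const"
      using exists_sqrt_if_leg_neq_minus_one by force
    have "qext_const * (s / qext_const) ^ 2 = u ^ 2 - 1"
      using s qext_const_neq_zero by (simp add: power_divide power2_eq_square)
    then have "QExt u (s / qext_const) \<in> circle" by (simp add: circle_def qnorm_def)
    then have "u \<in> re ` circle" by (rule rev_image_eqI) simp
    then show ?thesis by blast
  next
    case False
    then obtain s where s: "s ^ 2 = u ^ 2 - 1" using exists_sqrt_if_leg_neq_minus_one by blast
    have "(u + s) * (u - s) = 1" using s by (simp add: power2_eq_square algebra_simps)
    then have "u + s \<noteq> 0" "inverse (u + s) = u - s" by (auto intro: inverse_unique)
    then have "joukowsky (u + s) = u" "u + s \<in> UNIV - {0}" using two_neq_zero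
      by (simp_all add: joukowsky_def)
    then have "u \<in> joukowsky ` (UNIV - {0})" by (metis rev_image_eqI)
    then show ?thesis by blast
  qed
  then show ?thesis by blast
qed

lemma joukowsky_image_subset_Aset:
  shows "joukowsky ` (units.squares - {1, -1}) \<subseteq> Aset (1::'a) (leg (2::'a)) (leg (2::'a))"
    and "joukowsky ` (UNIV - {0} - units.squares - {1, -1})
      \<subseteq> Aset (1::'a) (- leg (2::'a)) (- leg (2::'a))"
proof -
  show "joukowsky ` (units.squares - {1, -1}) \<subseteq> Aset (1::'a) (leg (2::'a)) (leg (2::'a))"
  proof (rule image_subsetI)
    fix l assume "l \<in> units.squares - {1, -1}"
    then have "leg l = 1" "l \<notin> {0, 1, -1}" using leg_eq_1_iff[of l] units.squares_subset by auto
    then show "joukowsky l \<in> Aset 1 (leg (2::'a)) (leg (2::'a))" using joukowsky_mem_Aset[of l]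
      by simp
  qed
  show "joukowsky ` (UNIV - {0} - units.squares - {1, -1})
    \<subseteq> Aset (1::'a) (- leg (2::'a)) (- leg (2::'a))"
  proof (rule image_subsetI)
    fix l assume "l \<in> UNIV - {0} - units.squares - {1, -1::'a}"
    then have "leg l = -1" "l \<notin> {0, 1, -1}" using leg_eq_minus_1_iff[of l] by auto
    then show "joukowsky l \<in> Aset 1 (- leg (2::'a)) (- leg (2::'a))"
      using joukowsky_mem_Aset[of l] by simp
  qed
qed

lemma re_image_subset_Aset:
  shows "re ` (circle.squares - {1, -1}) \<subseteq> Aset (1::'a) (- leg (2::'a)) (leg (2::'a))"
    and "re ` (circle - circle.squares - {1, -1}) \<subseteq> Aset (1::'a) (leg (2::'a)) (- leg (2::'a))"
  using re_mem_Aset circle.squares_subset by (auto intro!: image_subsetI)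

lemma Diff_pm1_subset_images:
  "UNIV - {1, -1} \<subseteq> joukowsky ` (units.squares - {1, -1})
    \<union> joukowsky ` (UNIV - {0} - units.squares - {1, -1})
    \<union> re ` (circle.squares - {1, -1}) \<union> re ` (circle - circle.squares - {1, -1 :: 'a qext})"
proof
  fix u :: 'a assume u: "u \<in> UNIV - {1, -1}"
  consider l where "l \<noteq> 0" "u = joukowsky l" | z where "z \<in> circle" "u = re z"
    using range_joukowsky_Un_re by (metis Diff_iff UNIV_I UnE imageE singletonI)
  then show "u \<in> joukowsky ` (units.squares - {1, -1})
    \<union> joukowsky ` (UNIV - {0} - units.squares - {1, -1})
    \<union> re ` (circle.squares - {1, -1}) \<union> re ` (circle - circle.squares - {1, -1})"
  proof cases
    case 1
    then have "l \<notin> {1, -1}" using u joukowsky_one_minus_one[OF two_neq_zero] by auto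
    then show ?thesis using 1 by (cases "l \<in> units.squares") auto
  next
    case 2
    then have "z \<notin> {1, -1}" using u by auto
    then show ?thesis using 2 by (cases "z \<in> circle.squares") auto
  qed
qed

lemma Aset_eq_images:
  shows Aset_nu_nu: "Aset 1 (leg (2::'a)) (leg (2::'a)) = joukowsky ` (units.squares - {1, -1})"
    and Aset_neg_nu_neg_nu:
      "Aset 1 (- leg (2::'a)) (- leg (2::'a)) = joukowsky ` (UNIV - {0} - units.squares - {1, -1})"
    and Aset_neg_nu_nu: "Aset 1 (- leg (2::'a)) (leg (2::'a)) = re ` (circle.squares - {1, -1})"
    and Aset_nu_neg_nu:
      "Aset 1 (leg (2::'a)) (- leg (2::'a)) = re ` (circle - circle.squares - {1, -1})"
proof -
  have "leg (2::'a) \<noteq> - leg (2::'a)" "leg (2::'a) \<noteq> 0" using leg_two_cases by auto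
  then have disjoint:
    "Aset (1::'a) (leg (2::'a)) (leg (2::'a)) \<inter> Aset 1 (- leg (2::'a)) (- leg (2::'a)) = {}"
    "Aset (1::'a) (leg (2::'a)) (leg (2::'a)) \<inter> Aset 1 (- leg (2::'a)) (leg (2::'a)) = {}"
    "Aset (1::'a) (leg (2::'a)) (leg (2::'a)) \<inter> Aset 1 (leg (2::'a)) (- leg (2::'a)) = {}"
    "Aset (1::'a) (- leg (2::'a)) (- leg (2::'a)) \<inter> Aset 1 (- leg (2::'a)) (leg (2::'a)) = {}"
    "Aset (1::'a) (- leg (2::'a)) (- leg (2::'a)) \<inter> Aset 1 (leg (2::'a)) (- leg (2::'a)) = {}"
    "Aset (1::'a) (- leg (2::'a)) (leg (2::'a)) \<inter> Aset 1 (leg (2::'a)) (- leg (2::'a)) = {}"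
    and "Aset (1::'a) (leg (2::'a)) (leg (2::'a)) \<union> Aset 1 (- leg (2::'a)) (- leg (2::'a))
      \<union> Aset 1 (- leg (2::'a)) (leg (2::'a)) \<union> Aset 1 (leg (2::'a)) (- leg (2::'a))
        \<subseteq> UNIV - {1, -1}"
    by (simp_all add: Aset_disjoint Aset_subset_Diff_pm1)
  note cover = subset_trans[OF this(7) Diff_pm1_subset_images]
  show "Aset 1 (leg (2::'a)) (leg (2::'a)) = joukowsky ` (units.squares - {1, -1})"
    "Aset 1 (- leg (2::'a)) (- leg (2::'a)) = joukowsky ` (UNIV - {0} - units.squares - {1, -1})"
    "Aset 1 (- leg (2::'a)) (leg (2::'a)) = re ` (circle.squares - {1, -1})"
    "Aset 1 (leg (2::'a)) (- leg (2::'a)) = re ` (circle - circle.squares - {1, -1})"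
    by (rule subsets_eq_if_disjoint_cover[OF joukowsky_image_subset_Aset re_image_subset_Aset
          cover disjoint])+
qed

lemma joukowsky_unit_eq_imp:
  "x \<in> UNIV - {0} \<Longrightarrow> y \<in> UNIV - {0} \<Longrightarrow> joukowsky x = joukowsky (y::'a) \<Longrightarrow> y = x \<or> x * y = 1"
  using joukowsky_eq_imp[OF two_neq_zero] by blast

lemma cheb_joukowsky_unit: "x \<in> UNIV - {0::'a} \<Longrightarrow> cheb k (joukowsky x) = joukowsky (x ^ k)"
  using cheb_joukowsky[OF two_neq_zero] by blast

lemma cheb_re_circle: "z \<in> (circle :: 'a qext set) \<Longrightarrow> cheb k (re z) = re (z ^ k)"
  using cheb_re[OF two_neq_zero] .

lemma cheb_image_joukowsky:
  assumes "C \<subseteq> UNIV - {0::'a}"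
  shows "cheb k ` joukowsky ` C = joukowsky ` (\<lambda>l. l ^ k) ` C"
  unfolding image_image using assms cheb_joukowsky_unit by (intro image_cong) auto

lemma cheb_image_re:
  assumes "C \<subseteq> (circle :: 'a qext set)"
  shows "cheb k ` re ` C = re ` (\<lambda>z. z ^ k) ` C"
  unfolding image_image using assms cheb_re_circle by (intro image_cong) auto

lemma range_cheb:
  "range (cheb k) = joukowsky ` (\<lambda>l. l ^ k) ` (UNIV - {0::'a}) \<union> re ` (\<lambda>z. z ^ k) ` circle"
  using range_joukowsky_Un_re cheb_image_joukowsky[of "UNIV - {0}" k] cheb_image_re[of circle k]
  by (metis image_Un order_refl)

lemma joukowsky_image_squares:
  "joukowsky ` units.squares \<subseteq> Aset (1::'a) (leg (2::'a)) (leg (2::'a))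
    \<union> {1, - of_int (leg (-1::'a))}"
  using Aset_nu_nu joukowsky_one_minus_one[OF two_neq_zero] leg_eq_1_iff[of "-1"] by auto

lemma joukowsky_image_nonsquares:
  shows "joukowsky ` (UNIV - {0} - units.squares) \<subseteq> Aset (1::'a) (- leg (2::'a)) (- leg (2::'a))
    \<union> {-1}"
    and "leg (-1::'a) = 1 \<Longrightarrow>
      joukowsky ` (UNIV - {0} - units.squares) \<subseteq> Aset (1::'a) (- leg (2::'a)) (- leg (2::'a))"
  using Aset_neg_nu_neg_nu joukowsky_one_minus_one[OF two_neq_zero] leg_eq_1_iff[of "-1"]
    units.one_mem_squares by auto

lemma re_image_squares:
  "re ` circle.squares \<subseteq> Aset (1::'a) (- leg (2::'a)) (leg (2::'a)) \<union> {1, of_int (leg (-1::'a))}"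
  using Aset_neg_nu_nu minus_one_mem_circle_squares_iff by auto

lemma re_image_nonsquares:
  shows "re ` (circle - circle.squares) \<subseteq> Aset (1::'a) (leg (2::'a)) (- leg (2::'a)) \<union> {-1}"
    and "leg (-1::'a) = -1 \<Longrightarrow> re ` (circle - circle.squares)
      \<subseteq> Aset (1::'a) (leg (2::'a)) (- leg (2::'a))"
  using Aset_nu_neg_nu minus_one_mem_circle_squares_iff circle.one_mem_squares by auto

lemma cheb_image_Aset_nu_nu:
  "cheb k ` Aset (1::'a) (leg (2::'a)) (leg (2::'a)) \<subseteq> Aset (1::'a) (leg (2::'a)) (leg (2::'a))
    \<union> {1, - of_int (leg (-1::'a))}"
proof -
  have "cheb k ` Aset (1::'a) (leg (2::'a)) (leg (2::'a))
    = joukowsky ` (\<lambda>l. l ^ k) ` (units.squares - {1, -1})"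
    unfolding Aset_nu_nu by (rule cheb_image_joukowsky) (use units.squares_subset in blast)
  also have "\<dots> \<subseteq> joukowsky ` units.squares"
    by (intro image_mono image_subsetI) (simp add: units.power_mem_squares)
  also note joukowsky_image_squares
  finally show ?thesis .
qed

lemma cheb_image_Aset_neg_nu_nu:
  "cheb k ` Aset (1::'a) (- leg (2::'a)) (leg (2::'a))
    \<subseteq> Aset (1::'a) (- leg (2::'a)) (leg (2::'a)) \<union> {1, of_int (leg (-1::'a))}"
proof -
  have "cheb k ` Aset (1::'a) (- leg (2::'a)) (leg (2::'a))
    = re ` (\<lambda>z. z ^ k) ` (circle.squares - {1, -1})"
    unfolding Aset_neg_nu_nu by (rule cheb_image_re) (use circle.squares_subset in blast)
  also have "\<dots> \<subseteq> re ` circle.squares"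
    by (intro image_mono image_subsetI) (simp add: circle.power_mem_squares)
  also note re_image_squares
  finally show ?thesis .
qed

lemma cheb_image_Aset_odd:
  assumes "odd k"
  shows "cheb k ` Aset (1::'a) (leg (-1::'a) * leg (2::'a)) (- leg (2::'a))
      \<subseteq> Aset (1::'a) (leg (-1::'a) * leg (2::'a)) (- leg (2::'a)) \<union> {-1}" (is ?A)
    and "cheb k ` Aset (1::'a) (- leg (-1::'a) * leg (2::'a)) (- leg (2::'a))
      \<subseteq> Aset (1::'a) (- leg (-1::'a) * leg (2::'a)) (- leg (2::'a))" (is ?B)
proof -
  have "cheb k ` Aset (1::'a) (leg (2::'a)) (- leg (2::'a))
      = re ` (\<lambda>z. z ^ k) ` (circle - circle.squares - {1, -1})"
    unfolding Aset_nu_neg_nu by (rule cheb_image_re) blast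
  also have "\<dots> \<subseteq> re ` (circle - circle.squares)"
    by (intro image_mono image_subsetI) (use circle.power_odd_nonsquare assms in blast)
  finally have circle_part: "cheb k ` Aset (1::'a) (leg (2::'a)) (- leg (2::'a))
    \<subseteq> re ` (circle - circle.squares)" .
  have "cheb k ` Aset (1::'a) (- leg (2::'a)) (- leg (2::'a))
      = joukowsky ` (\<lambda>l. l ^ k) ` (UNIV - {0} - units.squares - {1, -1})"
    unfolding Aset_neg_nu_neg_nu by (rule cheb_image_joukowsky) blast
  also have "\<dots> \<subseteq> joukowsky ` (UNIV - {0} - units.squares)"
    by (intro image_mono image_subsetI) (use units.power_odd_nonsquare assms in blast)
  finally have units_part:
    "cheb k ` Aset (1::'a) (- leg (2::'a)) (- leg (2::'a))
      \<subseteq> joukowsky ` (UNIV - {0} - units.squares)" .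
  from leg_minus_one_cases have "?A \<and> ?B"
  proof
    assume eps: "leg (-1::'a) = 1"
    have "cheb k ` Aset (1::'a) (leg (2::'a)) (- leg (2::'a))
      \<subseteq> Aset 1 (leg (2::'a)) (- leg (2::'a)) \<union> {-1}"
      using circle_part re_image_nonsquares(1) by (rule order_trans)
    moreover have "cheb k ` Aset (1::'a) (- leg (2::'a)) (- leg (2::'a))
      \<subseteq> Aset 1 (- leg (2::'a)) (- leg (2::'a))"
      using units_part joukowsky_image_nonsquares(2)[OF eps] by (rule order_trans)
    ultimately show ?thesis using eps by simp
  next
    assume eps: "leg (-1::'a) = -1"
    have "cheb k ` Aset (1::'a) (- leg (2::'a)) (- leg (2::'a))
      \<subseteq> Aset 1 (- leg (2::'a)) (- leg (2::'a)) \<union> {-1}"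
      using units_part joukowsky_image_nonsquares(1) by (rule order_trans)
    moreover have "cheb k ` Aset (1::'a) (leg (2::'a)) (- leg (2::'a))
      \<subseteq> Aset 1 (leg (2::'a)) (- leg (2::'a))"
      using circle_part re_image_nonsquares(2)[OF eps] by (rule order_trans)
    ultimately show ?thesis using eps by simp
  qed
  then show ?A ?B by blast+
qed

lemma cheb_image_Aset_even:
  assumes "even k"
  shows "cheb k ` Aset (1::'a) (- leg (2::'a)) (- leg (2::'a))
      \<subseteq> Aset (1::'a) (leg (2::'a)) (leg (2::'a)) \<union> {1, - of_int (leg (-1::'a))}"
    and "cheb k ` Aset (1::'a) (leg (2::'a)) (- leg (2::'a))
      \<subseteq> Aset (1::'a) (- leg (2::'a)) (leg (2::'a)) \<union> {1, of_int (leg (-1::'a))}"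
proof -
  have "cheb k ` Aset (1::'a) (- leg (2::'a)) (- leg (2::'a))
      = joukowsky ` (\<lambda>l. l ^ k) ` (UNIV - {0} - units.squares - {1, -1})"
    unfolding Aset_neg_nu_neg_nu by (rule cheb_image_joukowsky) blast
  also have "\<dots> \<subseteq> joukowsky ` units.squares"
    by (intro image_mono image_subsetI) (simp add: units.power_even_mem_squares assms)
  also note joukowsky_image_squares
  finally show "cheb k ` Aset (1::'a) (- leg (2::'a)) (- leg (2::'a))
      \<subseteq> Aset (1::'a) (leg (2::'a)) (leg (2::'a)) \<union> {1, - of_int (leg (-1::'a))}" .
  have "cheb k ` Aset (1::'a) (leg (2::'a)) (- leg (2::'a))
      = re ` (\<lambda>z. z ^ k) ` (circle - circle.squares - {1, -1})"
    unfolding Aset_nu_neg_nu by (rule cheb_image_re) blast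
  also have "\<dots> \<subseteq> re ` circle.squares"
    by (intro image_mono image_subsetI) (simp add: circle.power_even_mem_squares assms)
  also note re_image_squares
  finally show "cheb k ` Aset (1::'a) (leg (2::'a)) (- leg (2::'a))
      \<subseteq> Aset (1::'a) (- leg (2::'a)) (leg (2::'a)) \<union> {1, of_int (leg (-1::'a))}" .
qed

lemma of_int_leg_minus_one_mem: "of_int (leg (-1::'a)) \<in> {1, -1 :: 'a}"
  using leg_minus_one_cases by auto

lemma Aset_Un_swap_signs:
  "Aset (1::'a) (- leg (2::'a)) (leg (2::'a)) \<union> Aset 1 (leg (2::'a)) (- leg (2::'a))
    = Aset 1 1 (-1) \<union> Aset 1 (-1) 1"
  "Aset (1::'a) (leg (2::'a)) (leg (2::'a)) \<union> Aset 1 (- leg (2::'a)) (- leg (2::'a))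
    = Aset 1 1 1 \<union> Aset 1 (-1) (-1)"
  using leg_two_cases by auto

lemma re_image_circle:
  "re ` circle \<subseteq> Aset (1::'a) 1 (-1) \<union> Aset 1 (-1) 1 \<union> {1, -1}"
proof -
  have "(circle :: 'a qext set) = circle.squares \<union> (circle - circle.squares)"
    using circle.squares_subset by blast
  then have "re ` circle = re ` circle.squares \<union> re ` (circle - circle.squares :: 'a qext set)"
    by (metis image_Un)
  also have "\<dots> \<subseteq> (Aset (1::'a) (- leg (2::'a)) (leg (2::'a)) \<union> {1, of_int (leg (-1::'a))})
      \<union> (Aset 1 (leg (2::'a)) (- leg (2::'a)) \<union> {-1})"
    by (rule Un_mono[OF re_image_squares re_image_nonsquares(1)])
  also have "\<dots> \<subseteq> Aset (1::'a) (- leg (2::'a)) (leg (2::'a))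
    \<union> Aset 1 (leg (2::'a)) (- leg (2::'a)) \<union> {1, -1}"
    using of_int_leg_minus_one_mem by auto
  finally show ?thesis unfolding Aset_Un_swap_signs(1) .
qed

lemma joukowsky_image_units:
  "joukowsky ` (UNIV - {0}) \<subseteq> Aset (1::'a) 1 1 \<union> Aset 1 (-1) (-1) \<union> {1, -1}"
proof -
  have "UNIV - {0::'a} = units.squares \<union> (UNIV - {0} - units.squares)"
    using units.squares_subset by blast
  then have "joukowsky ` (UNIV - {0::'a})
      = joukowsky ` units.squares \<union> joukowsky ` (UNIV - {0} - units.squares)"
    by (metis image_Un)
  also have "\<dots> \<subseteq> (Aset (1::'a) (leg (2::'a)) (leg (2::'a)) \<union> {1, - of_int (leg (-1::'a))})
      \<union> (Aset 1 (- leg (2::'a)) (- leg (2::'a)) \<union> {-1})"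
    by (rule Un_mono[OF joukowsky_image_squares joukowsky_image_nonsquares(1)])
  also have "\<dots> \<subseteq> Aset (1::'a) (leg (2::'a)) (leg (2::'a))
    \<union> Aset 1 (- leg (2::'a)) (- leg (2::'a)) \<union> {1, -1}"
    using of_int_leg_minus_one_mem by auto
  finally show ?thesis unfolding Aset_Un_swap_signs(2) .
qed

lemma range_cheb_if_dvd_card_pred_half:
  assumes "(card (UNIV::'a set) - 1) div 2 dvd k"
  shows "range (cheb k) \<subseteq> Aset (1::'a) 1 (-1) \<union> Aset 1 (-1) 1 \<union> {1, -1}"
    and "even k \<Longrightarrow> range (cheb k) \<subseteq> Aset (1::'a) (- leg (2::'a)) (leg (2::'a)) \<union> {1, -1}"
proof -
  have "card (UNIV - {0::'a}) = 2 * ((card (UNIV::'a set) - 1) div 2)"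
    using odd_card by (simp add: card_Diff_singleton)
  then have "(\<lambda>l. l ^ k) ` (UNIV - {0::'a}) \<subseteq> {1, -1}"
    using units.power_mem_pm1[OF _ assms] by blast
  then have units: "joukowsky ` (\<lambda>l. l ^ k) ` (UNIV - {0::'a}) \<subseteq> {1, -1}"
    using joukowsky_one_minus_one[OF two_neq_zero] by auto
  have "re ` (\<lambda>z. z ^ k) ` circle \<subseteq> re ` (circle :: 'a qext set)"
    by (intro image_mono image_subsetI) (rule circle.power_mem)
  then show "range (cheb k) \<subseteq> Aset (1::'a) 1 (-1) \<union> Aset 1 (-1) 1 \<union> {1, -1}"
    unfolding range_cheb using units re_image_circle by blast
  assume "even k"
  then have "re ` (\<lambda>z. z ^ k) ` circle \<subseteq> re ` (circle.squares :: 'a qext set)"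
    by (intro image_mono image_subsetI) (rule circle.power_even_mem_squares)
  then have "range (cheb k) \<subseteq> {1, -1} \<union> (Aset (1::'a) (- leg (2::'a)) (leg (2::'a))
    \<union> {1, of_int (leg (-1::'a))})"
    unfolding range_cheb using units re_image_squares by (intro Un_mono) auto
  then show "range (cheb k) \<subseteq> Aset (1::'a) (- leg (2::'a)) (leg (2::'a)) \<union> {1, -1}"
    using of_int_leg_minus_one_mem by auto
qed

lemma range_cheb_if_dvd_card_succ_half:
  assumes "(card (UNIV::'a set) + 1) div 2 dvd k"
  shows "range (cheb k) \<subseteq> Aset (1::'a) 1 1 \<union> Aset 1 (-1) (-1) \<union> {1, -1}"
    and "even k \<Longrightarrow> range (cheb k) \<subseteq> Aset (1::'a) (leg (2::'a)) (leg (2::'a)) \<union> {1, -1}"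
proof -
  have "card (circle :: 'a qext set) = 2 * ((card (UNIV::'a set) + 1) div 2)"
    using odd_card card_circle by simp
  then have "(\<lambda>z. z ^ k) ` (circle :: 'a qext set) \<subseteq> {1, -1}"
    using circle.power_mem_pm1[OF _ assms] by blast
  then have circle: "re ` (\<lambda>z. z ^ k) ` (circle :: 'a qext set) \<subseteq> {1, -1}" by auto
  have "joukowsky ` (\<lambda>l. l ^ k) ` (UNIV - {0::'a}) \<subseteq> joukowsky ` (UNIV - {0})"
    by (intro image_mono image_subsetI) (rule units.power_mem)
  then show "range (cheb k) \<subseteq> Aset (1::'a) 1 1 \<union> Aset 1 (-1) (-1) \<union> {1, -1}"
    unfolding range_cheb using circle joukowsky_image_units by blast
  assume "even k"
  then have "joukowsky ` (\<lambda>l. l ^ k) ` (UNIV - {0::'a}) \<subseteq> joukowsky ` units.squares"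
    by (intro image_mono image_subsetI) (rule units.power_even_mem_squares)
  then have "range (cheb k) \<subseteq> (Aset (1::'a) (leg (2::'a)) (leg (2::'a))
    \<union> {1, - of_int (leg (-1::'a))}) \<union> {1, -1}"
    unfolding range_cheb using circle joukowsky_image_squares by (intro Un_mono) auto
  then show "range (cheb k) \<subseteq> Aset (1::'a) (leg (2::'a)) (leg (2::'a)) \<union> {1, -1}"
    using of_int_leg_minus_one_mem by auto
qed

lemma leg_square_minus_one: "leg ((a::'a) ^ 2 - 1) = leg (a - 1) * leg (a + 1)"
  by (simp add: leg_mult[symmetric] power2_eq_square algebra_simps)

lemma Aset_Un_eq_nonsquare: "Aset (1::'a) 1 (-1) \<union> Aset 1 (-1) 1 = {a. leg (a ^ 2 - 1) = -1}"
proof (rule Set.set_eqI)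
  fix a :: 'a
  show "a \<in> Aset 1 1 (-1) \<union> Aset 1 (-1) 1 \<longleftrightarrow> a \<in> {a. leg (a ^ 2 - 1) = -1}"
    using leg_cases[of "a - 1"] leg_cases[of "a + 1"] by (auto simp: Aset_def leg_square_minus_one)
qed

lemma Aset_Un_eq_square: "Aset (1::'a) 1 1 \<union> Aset 1 (-1) (-1) \<union> {1, -1} = {a. leg (a ^ 2 - 1) \<noteq> -1}"
proof (rule Set.set_eqI)
  fix a :: 'a
  have "leg (a - 1) = 0 \<longleftrightarrow> a = 1" "leg (a + 1) = 0 \<longleftrightarrow> a = -1"
    by (simp_all add: leg_eq_0_iff add_eq_0_iff2)
  then show "a \<in> Aset 1 1 1 \<union> Aset 1 (-1) (-1) \<union> {1, -1} \<longleftrightarrow> a \<in> {a. leg (a ^ 2 - 1) \<noteq> -1}"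
    using leg_cases[of "a - 1"] leg_cases[of "a + 1"] by (auto simp: Aset_def leg_square_minus_one)
qed

lemma card_units: "card (UNIV - {0::'a}) = card (UNIV::'a set) - 1"
  by (simp add: card_Diff_singleton)

lemma card_units_squares: "card units.squares = (card (UNIV::'a set) - 1) div 2"
  using units.card_eq_double_card_squares card_units by simp

lemma card_circle_squares: "card (circle.squares :: 'a qext set) = (card (UNIV::'a set) + 1) div 2"
  using circle.card_eq_double_card_squares card_circle by simp

lemma bij_betw_cheb_Aset_nu_nu_iff:
  assumes "Aset (1::'a) (leg (2::'a)) (leg (2::'a)) \<noteq> {}"
  shows "bij_betw (cheb k) (Aset (1::'a) (leg (2::'a)) (leg (2::'a)))
      (Aset 1 (leg (2::'a)) (leg (2::'a)))
    \<longleftrightarrow> coprime k ((card (UNIV::'a set) - 1) div 2)"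
  using assms unfolding Aset_nu_nu card_units_squares[symmetric]
  by (intro units.bij_betw_image_squares_iff[where u = joukowsky and g = "cheb k",
        OF joukowsky_unit_eq_imp cheb_joukowsky_unit]) simp

lemma bij_betw_cheb_Aset_neg_nu_neg_nu_iff:
  assumes "Aset (1::'a) (- leg (2::'a)) (- leg (2::'a)) \<noteq> {}"
  shows "bij_betw (cheb k) (Aset (1::'a) (- leg (2::'a)) (- leg (2::'a)))
      (Aset 1 (- leg (2::'a)) (- leg (2::'a)))
    \<longleftrightarrow> coprime k (card (UNIV::'a set) - 1)"
  using assms unfolding Aset_neg_nu_neg_nu card_units[symmetric]
  by (intro units.bij_betw_image_nonsquares_iff[where u = joukowsky and g = "cheb k",
        OF joukowsky_unit_eq_imp cheb_joukowsky_unit]) simp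

lemma bij_betw_cheb_Aset_neg_nu_nu_iff:
  assumes "Aset (1::'a) (- leg (2::'a)) (leg (2::'a)) \<noteq> {}"
  shows "bij_betw (cheb k) (Aset (1::'a) (- leg (2::'a)) (leg (2::'a)))
      (Aset 1 (- leg (2::'a)) (leg (2::'a)))
    \<longleftrightarrow> coprime k ((card (UNIV::'a set) + 1) div 2)"
  using assms unfolding Aset_neg_nu_nu card_circle_squares[symmetric]
  by (intro circle.bij_betw_image_squares_iff[where u = re and g = "cheb k",
        OF re_circle_eq_imp cheb_re_circle]) simp

lemma bij_betw_cheb_Aset_nu_neg_nu_iff:
  assumes "Aset (1::'a) (leg (2::'a)) (- leg (2::'a)) \<noteq> {}"
  shows "bij_betw (cheb k) (Aset (1::'a) (leg (2::'a)) (- leg (2::'a)))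
      (Aset 1 (leg (2::'a)) (- leg (2::'a)))
    \<longleftrightarrow> coprime k (card (UNIV::'a set) + 1)"
  using assms unfolding Aset_nu_neg_nu card_circle[symmetric]
  by (intro circle.bij_betw_image_nonsquares_iff[where u = re and g = "cheb k",
        OF re_circle_eq_imp cheb_re_circle]) simp

lemma bij_betw_cheb_Aset_iff:
  assumes "e1 \<in> {1, -1}" "e2 \<in> {1, -1}" and nonempty: "Aset (1::'a) e1 e2 \<noteq> {}"
  shows "bij_betw (cheb k) (Aset (1::'a) e1 e2) (Aset 1 e1 e2)
    \<longleftrightarrow> gcd k (dpar (card (UNIV::'a set)) (leg (2::'a) * e1) (leg (2::'a) * e2)) = 1"
proof -
  have nu: "leg (2::'a) * leg (2::'a) = 1" using leg_two_cases by auto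
  have "e1 = leg (2::'a) \<or> e1 = - leg (2::'a)" "e2 = leg (2::'a) \<or> e2 = - leg (2::'a)"
    using assms(1,2) leg_two_cases by auto
  then consider "e1 = leg (2::'a)" "e2 = leg (2::'a)" | "e1 = - leg (2::'a)" "e2 = - leg (2::'a)"
    | "e1 = - leg (2::'a)" "e2 = leg (2::'a)" | "e1 = leg (2::'a)" "e2 = - leg (2::'a)"
    by blast
  then show ?thesis
  proof cases
    case 1
    then show ?thesis using bij_betw_cheb_Aset_nu_nu_iff nonempty nu
      by (simp add: dpar_def coprime_iff_gcd_eq_1)
  next
    case 2
    then show ?thesis using bij_betw_cheb_Aset_neg_nu_neg_nu_iff nonempty nu
      by (simp add: dpar_def coprime_iff_gcd_eq_1)
  next
    case 3
    then show ?thesis using bij_betw_cheb_Aset_neg_nu_nu_iff nonempty nu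
      by (simp add: dpar_def coprime_iff_gcd_eq_1)
  next
    case 4
    then show ?thesis using bij_betw_cheb_Aset_nu_neg_nu_iff nonempty nu
      by (simp add: dpar_def coprime_iff_gcd_eq_1)
  qed
qed

end

theorem theorem9p1:
  fixes k :: nat
  assumes oddq: "odd (card (UNIV::'a::{finite,field} set))"
    and k1: "k \<ge> 1"
  defines "q \<equiv> card (UNIV::'a set)"
    and "\<epsilon> \<equiv> leg (-1::'a)"
    and "\<nu> \<equiv> leg (2::'a)"
  shows "cheb k (1::'a) = 1 \<and> cheb k (-1::'a) = (-1) ^ k
    \<and> (cheb k ` Aset (1::'a) \<nu> \<nu> \<subseteq> Aset 1 \<nu> \<nu> \<union> {1, - of_int \<epsilon>}
       \<and> cheb k ` Aset (1::'a) (-\<nu>) \<nu> \<subseteq> Aset 1 (-\<nu>) \<nu> \<union> {1, of_int \<epsilon>})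
    \<and> (odd k \<longrightarrow>
         cheb k ` Aset (1::'a) (\<epsilon>*\<nu>) (-\<nu>) \<subseteq> Aset 1 (\<epsilon>*\<nu>) (-\<nu>) \<union> {-1}
       \<and> cheb k ` Aset (1::'a) (-\<epsilon>*\<nu>) (-\<nu>) \<subseteq> Aset 1 (-\<epsilon>*\<nu>) (-\<nu>))
    \<and> (even k \<longrightarrow>
         cheb k ` Aset (1::'a) (-\<nu>) (-\<nu>) \<subseteq> Aset 1 \<nu> \<nu> \<union> {1, - of_int \<epsilon>}
       \<and> cheb k ` Aset (1::'a) \<nu> (-\<nu>) \<subseteq> Aset 1 (-\<nu>) \<nu> \<union> {1, of_int \<epsilon>})
    \<and> ((q - 1) div 2 dvd k \<longrightarrow>
         cheb k ` (UNIV::'a set) \<subseteq> Aset 1 1 (-1) \<union> Aset 1 (-1) 1 \<union> {1, -1}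
       \<and> Aset (1::'a) 1 (-1) \<union> Aset 1 (-1) 1 = {a. leg (a ^ 2 - 1) = -1}
       \<and> (even k \<longrightarrow> cheb k ` (UNIV::'a set) \<subseteq> Aset 1 (-\<nu>) \<nu> \<union> {1, -1}))
    \<and> ((q + 1) div 2 dvd k \<longrightarrow>
         cheb k ` (UNIV::'a set) \<subseteq> Aset 1 1 1 \<union> Aset 1 (-1) (-1) \<union> {1, -1}
       \<and> Aset (1::'a) 1 1 \<union> Aset 1 (-1) (-1) \<union> {1, -1} = {a. leg (a ^ 2 - 1) \<noteq> -1}
       \<and> (even k \<longrightarrow> cheb k ` (UNIV::'a set) \<subseteq> Aset 1 \<nu> \<nu> \<union> {1, -1}))
    \<and> (\<forall>e1\<in>{1, -1}. \<forall>e2\<in>{1, -1}. Aset (1::'a) e1 e2 \<noteq> {} \<longrightarrow>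
         (bij_betw (cheb k) (Aset (1::'a) e1 e2) (Aset 1 e1 e2)
          \<longleftrightarrow> gcd k (dpar q (\<nu> * e1) (\<nu> * e2)) = 1))"
proof -
  interpret odd_field "TYPE('a)" by unfold_locales (fact oddq)
  show ?thesis
    unfolding q_def \<epsilon>_def \<nu>_def
    by (intro conjI impI ballI; (rule cheb_one cheb_minus_one cheb_image_Aset_nu_nu
        cheb_image_Aset_neg_nu_nu cheb_image_Aset_odd cheb_image_Aset_even
        range_cheb_if_dvd_card_pred_half range_cheb_if_dvd_card_succ_half
        Aset_Un_eq_nonsquare Aset_Un_eq_square bij_betw_cheb_Aset_iff; assumption))
qed

end
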